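(* For the Ces\`aro operator $\mathcal{C}$ acting from $H^\infty$ to the $\alpha$-Bloch space $\mathcal{B}^\alpha$: $$3\le\|\mathcal{C}\|_{H^\infty\to\mathcal{B}^\alpha}\le 4\quad\text{if }\alpha=1,\qquad \frac32\le\|\mathcal{C}\|_{H^\infty\to\mathcal{B}^\alpha}\le 4\quad\text{if }\alpha>1.$$ Moreover, $\mathcal{C}$ is not bounded from $H^\infty$ to $\mathcal{B}^\alpha$ when $0<\alpha<1$.
   Context: $\mathbb{D}$ is the open unit disc and $H(\mathbb{D})$ the space of analytic functions on $\mathbb{D}$. For $f(z)=\sum_{k\ge0}a_kz^k\in H(\mathbb{D})$ the Ces\`aro operator is $\mathcal{C}(f)(z)=\sum_{n\ge0}\Big(\frac{1}{n+1}\sum_{k=0}^n a_k\Big)z^n=\int_0^1\frac{f(tz)}{1-tz}\,dt$. $H^\infty$ is the space of bounded analytic functions on $\mathbb{D}$ with norm $\|f\|_\infty=\sup_{z\in\mathbb{D}}|f(z)|$. For $\alpha>0$ the $\alpha$-Bloch space $\mathcal{B}^\alpha$ consists of $f\in H(\mathbb{D})$ with $\sup_{z\in\mathbb{D}}(1-|z|^2)^\alpha|f'(z)|<\infty$, normed by $\|f\|_{\mathcal{B}^\alpha}=|f(0)|+\sup_{z\in\mathbb{D}}(1-|z|^2)^\alpha|f'(z)|$. Operator norms are $\|\mathcal{C}\|_{X\to Y}=\sup\{\|\mathcal{C}f\|_Y:\|f\|_X\le 1\}$. *)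

theory Defs
  imports "HOL-Analysis.Analysis"
begin

definition Hinf :: "(complex \<Rightarrow> complex) set" where
  "Hinf = {f. f holomorphic_on ball 0 1 \<and> bounded (f ` ball 0 1)}"

definition hinf_norm :: "(complex \<Rightarrow> complex) \<Rightarrow> real" where
  "hinf_norm f = (SUP z\<in>ball 0 1. norm (f z))"

definition cesaro :: "(complex \<Rightarrow> complex) \<Rightarrow> complex \<Rightarrow> complex" where
  "cesaro f z = integral {0..1::real} (\<lambda>t. f (of_real t * z) / (1 - of_real t * z))"

text \<open>The alpha-Bloch norm, valued in the extended reals (infinite iff the function
  is not in the alpha-Bloch space).\<close>
definition bloch_norm :: "real \<Rightarrow> (complex \<Rightarrow> complex) \<Rightarrow> ereal" where
  "bloch_norm \<alpha> g = ereal (norm (g 0)) +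
     (SUP z\<in>ball 0 1. ereal ((1 - (norm z)\<^sup>2) powr \<alpha> * norm (deriv g z)))"

text \<open>Operator norm of the Cesaro operator from H-infinity to the alpha-Bloch space
  (infinite iff the operator is unbounded).\<close>
definition cesaro_opnorm :: "real \<Rightarrow> ereal" where
  "cesaro_opnorm \<alpha> = (SUP f\<in>{f\<in>Hinf. hinf_norm f \<le> 1}. bloch_norm \<alpha> (cesaro f))"

end

theory Submission
  imports Defs "HOL-Complex_Analysis.Complex_Analysis" "HOL-Real_Asymp.Real_Asymp"
begin

text \<open>Differentiating under the integral sign,
  \<open>C(f)'(z) = \<integral>\<^sub>0\<^sup>1 t (f'(tz)/(1-tz) + f(tz)/(1-tz)\<^sup>2) dt\<close>.
  For \<open>\<parallel>f\<parallel>\<^sub>\<infinity> \<le> 1\<close> the Schwarz-Pick estimate \<open>|f'(w)| (1-|w|\<^sup>2) \<le> 1\<close> bounds the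
  integrand by \<open>(2+r)/(1+r) \<cdot> (1-tr)\<^sup>-\<^sup>2\<close> with \<open>r = |z|\<close>, whence
  \<open>|C(f)'(z)| \<le> (2+r)/(1-r\<^sup>2)\<close>; together with \<open>|C(f)(0)| = |f(0)| \<le> 1\<close> this gives the
  upper bound \<open>1 + 3\<close> for \<open>\<alpha> \<ge> 1\<close>.
  The lower bounds come from testing \<open>f = 1\<close>: on \<open>(0,1)\<close>,
  \<open>C(1)'(x) = (x/(1-x) + log(1-x))/x\<^sup>2\<close>, and \<open>(1-x\<^sup>2)\<^sup>\<alpha> C(1)'(x)\<close> tends to \<open>1/2\<close> as
  \<open>x \<rightarrow> 0\<close>, and as \<open>x \<rightarrow> 1\<close> to \<open>2\<close> for \<open>\<alpha> = 1\<close> and to \<open>\<infinity>\<close> for \<open>\<alpha> < 1\<close>.\<close>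

lemma norm_deriv_0_le_1:
  assumes hol: "f holomorphic_on ball 0 1"
    and bounded: "\<And>z. z \<in> ball 0 1 \<Longrightarrow> norm (f z) \<le> 1"
  shows "norm (deriv f 0) \<le> 1"
proof (rule field_le_mult_one_interval)
  fix s :: real
  assume s: "0 < s" "s < 1"
  have hol_s: "f holomorphic_on ball 0 s"
    using hol by (rule holomorphic_on_subset) (use s in auto)
  have "norm ((deriv ^^ 1) f 0) \<le> fact 1 * 1 / s ^ 1"
  proof (rule Cauchy_inequality[OF hol_s _ \<open>0 < s\<close>])
    show "continuous_on (cball 0 s) f"
      by (intro holomorphic_on_imp_continuous_on holomorphic_on_subset[OF hol]) (use s in auto)
    show "norm (f x) \<le> 1" if "norm (0 - x) = s" for x
      using bounded that s by auto
  qed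
  then show "s * norm (deriv f 0) \<le> 1"
    using s by (simp add: field_simps)
qed

lemma Schwarz_Pick_deriv_bound:
  assumes hol: "f holomorphic_on ball 0 1"
    and bounded: "\<And>z. z \<in> ball 0 1 \<Longrightarrow> norm (f z) \<le> 1"
    and w: "w \<in> ball 0 1"
  shows "norm (deriv f w) * (1 - norm w ^ 2) \<le> 1"
proof -
  define \<phi> where "\<phi> = Moebius_function 0 (- w)"
  have \<phi>_eq: "\<phi> = (\<lambda>z. (z + w) / (1 + cnj w * z))"
    by (simp add: \<phi>_def Moebius_function_def fun_eq_iff)
  have \<phi>_in: "\<phi> z \<in> ball 0 1" if "z \<in> ball 0 1" for z
    unfolding \<phi>_def using w that by (auto intro!: Moebius_function_norm_lt_1)
  have hol_comp: "f \<circ> \<phi> holomorphic_on ball 0 1"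
    using w \<phi>_in unfolding \<phi>_def
    by (intro holomorphic_on_compose_gen[OF _ hol] Moebius_function_holomorphic) auto
  have "(\<phi> has_field_derivative 1 - cnj w * w) (at 0)"
    unfolding \<phi>_eq by (rule derivative_eq_intros refl | simp)+
  moreover have "1 - cnj w * w = of_real (1 - norm w ^ 2)"
    using complex_norm_square[of w] by simp
  ultimately have "(\<phi> has_field_derivative of_real (1 - norm w ^ 2)) (at 0)"
    by (rule DERIV_cong)
  moreover have "(f has_field_derivative deriv f w) (at (\<phi> 0))"
    using hol w by (auto simp: \<phi>_eq intro: holomorphic_derivI)
  ultimately have "(f \<circ> \<phi> has_field_derivative deriv f w * of_real (1 - norm w ^ 2)) (at 0)"
    by (rule DERIV_chain[rotated])
  then have deriv_comp: "deriv (f \<circ> \<phi>) 0 = deriv f w * of_real (1 - norm w ^ 2)"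
    by (rule DERIV_imp_deriv)
  have "norm w ^ 2 \<le> 1"
    using w by (simp add: power_le_one)
  then have "norm (deriv (f \<circ> \<phi>) 0) = norm (deriv f w) * (1 - norm w ^ 2)"
    unfolding deriv_comp norm_mult norm_of_real by simp
  moreover have "norm (deriv (f \<circ> \<phi>) 0) \<le> 1"
  proof (rule norm_deriv_0_le_1[OF hol_comp])
    show "norm ((f \<circ> \<phi>) z) \<le> 1" if "z \<in> ball 0 1" for z
      using bounded[OF \<phi>_in[OF that]] by simp
  qed
  ultimately show ?thesis
    by simp
qed

lemma norm_le_hinf_norm:
  assumes "f \<in> Hinf" "z \<in> ball 0 1"
  shows "norm (f z) \<le> hinf_norm f"
  unfolding hinf_norm_def
proof (rule cSUP_upper[OF assms(2)])
  show "bdd_above ((\<lambda>z. norm (f z)) ` ball 0 1)"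
    using assms(1) by (intro bounded_imp_bdd_above) (simp add: Hinf_def bounded_norm_comp)
qed

lemma of_real_mult_mem_unit_ball:
  assumes "z \<in> ball 0 1" "t \<in> {0..1}"
  shows "of_real t * z \<in> ball (0::complex) 1"
proof -
  have "norm (of_real t * z) \<le> norm z"
    using assms by (simp add: norm_mult mult_left_le_one_le)
  then show ?thesis
    using assms(1) by simp
qed

definition cesaro_deriv_integrand :: "(complex \<Rightarrow> complex) \<Rightarrow> complex \<Rightarrow> real \<Rightarrow> complex" where
  "cesaro_deriv_integrand f z t = of_real t *
     (deriv f (of_real t * z) / (1 - of_real t * z) + f (of_real t * z) / (1 - of_real t * z)\<^sup>2)"

lemma has_field_derivative_cesaro_integrand:
  assumes hol: "f holomorphic_on ball 0 1" and tz: "of_real t * z \<in> ball 0 1"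
  shows "((\<lambda>z. f (of_real t * z) / (1 - of_real t * z)) has_field_derivative
           cesaro_deriv_integrand f z t) (at z)"
proof -
  have nz: "1 - of_real t * z \<noteq> 0"
    using tz by auto
  have quotient_eq: "(A * T * u + B * T) / u\<^sup>2 = T * (A / u + B / u\<^sup>2)" if "u \<noteq> 0"
    for A B T u :: complex
    using that by (simp add: field_simps power2_eq_square)
  have "(f has_field_derivative deriv f (of_real t * z)) (at (of_real t * z))"
    using hol tz by (intro holomorphic_derivI[of f "ball 0 1"]) auto
  then have "((\<lambda>z. f (of_real t * z)) has_field_derivative deriv f (of_real t * z) * of_real t) (at z)"
    by (rule DERIV_chain2) (auto intro!: derivative_eq_intros)
  then have "((\<lambda>z. f (of_real t * z) / (1 - of_real t * z)) has_field_derivative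
      (deriv f (of_real t * z) * of_real t * (1 - of_real t * z) + f (of_real t * z) * of_real t)
        / (1 - of_real t * z)\<^sup>2) (at z)"
    using nz by (auto intro!: derivative_eq_intros simp: power2_eq_square)
  then show ?thesis
    unfolding cesaro_deriv_integrand_def by (rule DERIV_cong) (rule quotient_eq[OF nz])
qed

lemma continuous_on_cesaro_deriv_integrand:
  assumes hol: "f holomorphic_on ball 0 1"
  shows "continuous_on (ball 0 1 \<times> {0..1}) (\<lambda>(z, t). cesaro_deriv_integrand f z t)"
proof -
  let ?D = "ball 0 1 \<times> {0..1::real}"
  let ?w = "\<lambda>p::complex \<times> real. of_real (snd p) * fst p"
  have w_cont: "continuous_on ?D ?w"
    by (intro continuous_intros)
  have w_maps: "?w ` ?D \<subseteq> ball 0 1"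
    using of_real_mult_mem_unit_ball by auto
  have "continuous_on (ball 0 1) f" "continuous_on (ball 0 1) (deriv f)"
    using hol by (auto intro: holomorphic_on_imp_continuous_on holomorphic_deriv)
  note [continuous_intros] =
    continuous_on_compose2[OF this(1) _ w_maps] continuous_on_compose2[OF this(2) _ w_maps]
  have "1 - ?w p \<noteq> 0" if "p \<in> ?D" for p
  proof -
    have "?w p \<in> ball 0 1"
      using w_maps that by blast
    then show ?thesis
      by auto
  qed
  then have "continuous_on ?D (\<lambda>p. cesaro_deriv_integrand f (fst p) (snd p))"
    unfolding cesaro_deriv_integrand_def by (intro continuous_intros w_cont) auto
  then show ?thesis
    by (simp add: case_prod_beta')
qed

lemma integrable_cesaro_deriv_integrand:
  assumes "f holomorphic_on ball 0 1" "z \<in> ball 0 1"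
  shows "cesaro_deriv_integrand f z integrable_on {0..1}"
proof (rule integrable_continuous_real)
  have "continuous_on {0..1} (\<lambda>t. (\<lambda>(z, t). cesaro_deriv_integrand f z t) (z, t))"
    by (rule continuous_on_compose2[OF continuous_on_cesaro_deriv_integrand[OF assms(1)]])
      (use assms(2) in \<open>auto intro: continuous_intros\<close>)
  then show "continuous_on {0..1} (cesaro_deriv_integrand f z)"
    by simp
qed

lemma has_field_derivative_cesaro:
  assumes hol: "f holomorphic_on ball 0 1" and z: "z \<in> ball 0 1"
  shows "(cesaro f has_field_derivative integral {0..1} (cesaro_deriv_integrand f z)) (at z)"
proof -
  let ?F = "\<lambda>z (t::real). f (of_real t * z) / (1 - of_real t * z)"
  have "((\<lambda>z. integral (cbox 0 1) (?F z)) has_field_derivative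
          integral (cbox 0 1) (cesaro_deriv_integrand f z)) (at z within ball 0 1)"
  proof (rule leibniz_rule_field_derivative)
    fix x :: complex and t :: real
    assume x: "x \<in> ball 0 1" and t: "t \<in> cbox 0 1"
    have "of_real t * x \<in> ball 0 1"
      by (rule of_real_mult_mem_unit_ball[OF x]) (use t in \<open>simp add: cbox_interval\<close>)
    then show "((\<lambda>x. ?F x t) has_field_derivative cesaro_deriv_integrand f x t) (at x within ball 0 1)"
      by (rule has_field_derivative_at_within[OF has_field_derivative_cesaro_integrand[OF hol]])
  next
    fix x :: complex
    assume x: "x \<in> ball 0 1"
    have contf: "continuous_on (ball 0 1) f"
      using hol by (rule holomorphic_on_imp_continuous_on)
    have maps: "(\<lambda>t. of_real t * x) ` {0..1} \<subseteq> ball 0 1"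
      using of_real_mult_mem_unit_ball[OF x] by blast
    have "continuous_on {0..1} (\<lambda>t. f (of_real t * x))"
      by (rule continuous_on_compose2[OF contf _ maps]) (intro continuous_intros)
    moreover have "1 - of_real t * x \<noteq> 0" if "t \<in> {0..1}" for t
      using of_real_mult_mem_unit_ball[OF x that] by auto
    ultimately have "continuous_on {0..1} (?F x)"
      by (intro continuous_intros) auto
    then show "?F x integrable_on cbox 0 1"
      by (simp add: integrable_continuous_real)
  qed (use z continuous_on_cesaro_deriv_integrand[OF hol] in auto)
  then show ?thesis
    unfolding cesaro_def[abs_def] by (simp add: at_within_open[OF z] cbox_interval)
qed

lemma one_minus_mult_pos:
  fixes t x :: real
  assumes "t \<in> {0..1}" "x < 1"
  shows "0 < 1 - t * x"
proof (cases "x \<le> 0")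
  case True
  then show ?thesis
    using assms mult_nonneg_nonpos[of t x] by simp
next
  case False
  then have "t * x \<le> x"
    using assms by (simp add: mult_left_le_one_le)
  then show ?thesis
    using assms by simp
qed

lemma has_integral_inverse_square:
  fixes r :: real
  assumes "r < 1"
  shows "((\<lambda>t. 1 / (1 - t * r)\<^sup>2) has_integral 1 / (1 - r)) {0..1}"
proof -
  have "((\<lambda>t. 1 / (1 - t * r)\<^sup>2) has_integral 1 / (1 - 1 * r) - 0 / (1 - 0 * r)) {0..1}"
  proof (rule fundamental_theorem_of_calculus)
    fix t :: real
    assume t: "t \<in> {0..1}"
    have "1 - t * r \<noteq> 0"
      using one_minus_mult_pos[OF t assms] by simp
    then have "((\<lambda>t. t / (1 - t * r)) has_real_derivative 1 / (1 - t * r)\<^sup>2) (at t)"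
      by (auto intro!: derivative_eq_intros simp: field_simps power2_eq_square)
    then show "((\<lambda>t. t / (1 - t * r)) has_vector_derivative 1 / (1 - t * r)\<^sup>2) (at t within {0..1})"
      by (simp add: has_real_derivative_iff_has_vector_derivative[symmetric] has_field_derivative_at_within)
  qed simp
  then show ?thesis
    by simp
qed

lemma norm_deriv_div_one_minus_le:
  assumes hol: "f holomorphic_on ball 0 1"
    and bounded: "\<And>z. z \<in> ball 0 1 \<Longrightarrow> norm (f z) \<le> 1"
    and w: "w \<in> ball 0 1"
  shows "norm (deriv f w) / norm (1 - w) \<le> 1 / ((1 - norm w)\<^sup>2 * (1 + norm w))"
proof -
  have pos: "0 < 1 - norm w" "0 < 1 + norm w"
    using w by (auto intro: add_pos_nonneg)
  have "norm (deriv f w) * ((1 - norm w) * (1 + norm w)) \<le> 1"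
    using Schwarz_Pick_deriv_bound[OF hol bounded w] by (simp add: power2_eq_square algebra_simps)
  then have "norm (deriv f w) \<le> 1 / ((1 - norm w) * (1 + norm w))"
    using pos by (simp add: le_divide_eq)
  then have "norm (deriv f w) / norm (1 - w) \<le> 1 / ((1 - norm w) * (1 + norm w)) / (1 - norm w)"
    using pos norm_triangle_ineq2[of 1 w] by (intro frac_le) auto
  then show ?thesis
    by (simp add: power2_eq_square mult_ac)
qed

lemma norm_cesaro_deriv_integrand_le:
  assumes hol: "f holomorphic_on ball 0 1"
    and bounded: "\<And>z. z \<in> ball 0 1 \<Longrightarrow> norm (f z) \<le> 1"
    and z: "z \<in> ball 0 1" and t: "t \<in> {0..1}"
  shows "norm (cesaro_deriv_integrand f z t) \<le> (2 + norm z) / (1 + norm z) * (1 / (1 - t * norm z)\<^sup>2)"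
proof -
  define w where "w = of_real t * z"
  define r where "r = norm z"
  have w: "w \<in> ball 0 1"
    unfolding w_def by (rule of_real_mult_mem_unit_ball[OF z t])
  have norm_w: "norm w = t * r"
    using t by (simp add: w_def r_def norm_mult)
  have r: "0 \<le> r" "r < 1"
    using z by (auto simp: r_def)
  have tr: "0 \<le> t * r" "t * r < 1"
    using t r norm_w w by auto
  have regroup: "t * (1 / (a * b) + 1 / a) = (t / b + t) * (1 / a)" for a b :: real
    by (simp add: algebra_simps)
  have dist_1: "1 - t * r \<le> norm (1 - w)"
    using norm_triangle_ineq2[of 1 w] norm_w by simp
  have deriv_term: "norm (deriv f w) / norm (1 - w) \<le> 1 / ((1 - t * r)\<^sup>2 * (1 + t * r))"
    using norm_deriv_div_one_minus_le[OF hol bounded w] by (simp add: norm_w)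
  have value_term: "norm (f w) / norm (1 - w) ^ 2 \<le> 1 / (1 - t * r)\<^sup>2"
    using tr dist_1 bounded[OF w] by (intro frac_le power_mono) auto
  have "norm (cesaro_deriv_integrand f z t)
      \<le> t * (norm (deriv f w) / norm (1 - w) + norm (f w) / norm (1 - w) ^ 2)"
    using t norm_triangle_ineq[of "deriv f w / (1 - w)" "f w / (1 - w)\<^sup>2"]
    by (simp add: cesaro_deriv_integrand_def w_def[symmetric] norm_mult norm_divide norm_power
        mult_left_mono)
  also have "\<dots> \<le> t * (1 / ((1 - t * r)\<^sup>2 * (1 + t * r)) + 1 / (1 - t * r)\<^sup>2)"
    using t deriv_term value_term by (intro mult_left_mono add_mono) auto
  also have "\<dots> = (t / (1 + t * r) + t) * (1 / (1 - t * r)\<^sup>2)"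
    using regroup .
  also have "\<dots> \<le> (1 / (1 + r) + 1) * (1 / (1 - t * r)\<^sup>2)"
  proof -
    have "t * (1 + r) \<le> 1 + t * r"
      using t by (simp add: algebra_simps)
    then have "t / (1 + t * r) \<le> 1 / (1 + r)"
      using tr r by (simp add: field_simps)
    then show ?thesis
      using t by (intro mult_right_mono) auto
  qed
  also have "\<dots> = (2 + r) / (1 + r) * (1 / (1 - t * r)\<^sup>2)"
    using r by (simp add: field_simps)
  finally show ?thesis
    by (simp add: r_def)
qed

lemma norm_deriv_cesaro_le:
  assumes hol: "f holomorphic_on ball 0 1"
    and bounded: "\<And>z. z \<in> ball 0 1 \<Longrightarrow> norm (f z) \<le> 1"
    and z: "z \<in> ball 0 1"
  shows "norm (deriv (cesaro f) z) \<le> (2 + norm z) / (1 - (norm z)\<^sup>2)"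
proof -
  let ?r = "norm z"
  have r: "0 \<le> ?r" "?r < 1"
    using z by auto
  have majorant: "((\<lambda>t. (2 + ?r) / (1 + ?r) * (1 / (1 - t * ?r)\<^sup>2))
      has_integral (2 + ?r) / (1 + ?r) * (1 / (1 - ?r))) {0..1}"
    by (intro has_integral_mult_right has_integral_inverse_square r)
  have "norm (deriv (cesaro f) z) = norm (integral {0..1} (cesaro_deriv_integrand f z))"
    by (simp add: DERIV_imp_deriv[OF has_field_derivative_cesaro[OF hol z]])
  also have "\<dots> \<le> integral {0..1} (\<lambda>t. (2 + ?r) / (1 + ?r) * (1 / (1 - t * ?r)\<^sup>2))"
    using integrable_cesaro_deriv_integrand[OF hol z] has_integral_integrable[OF majorant]
      norm_cesaro_deriv_integrand_le[OF hol bounded z]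
    by (rule integral_norm_bound_integral)
  also have "\<dots> = (2 + ?r) / (1 - ?r\<^sup>2)"
    using integral_unique[OF majorant] r by (simp add: field_simps power2_eq_square)
  finally show ?thesis .
qed

lemma bloch_norm_cesaro_le_4:
  assumes \<alpha>: "1 \<le> \<alpha>"
    and hol: "f holomorphic_on ball 0 1"
    and bounded: "\<And>z. z \<in> ball 0 1 \<Longrightarrow> norm (f z) \<le> 1"
  shows "bloch_norm \<alpha> (cesaro f) \<le> 4"
proof -
  have "norm (cesaro f 0) \<le> 1"
    using bounded[of 0] by (simp add: cesaro_def)
  moreover have "(SUP z\<in>ball 0 1. ereal ((1 - (norm z)\<^sup>2) powr \<alpha> * norm (deriv (cesaro f) z))) \<le> 3"
  proof (rule SUP_least)
    fix z :: complex
    assume z: "z \<in> ball 0 1"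
    have weight: "0 < 1 - (norm z)\<^sup>2" "1 - (norm z)\<^sup>2 \<le> 1"
      using z by (auto simp: abs_square_less_1)
    have "(1 - (norm z)\<^sup>2) powr \<alpha> * norm (deriv (cesaro f) z)
        \<le> (1 - (norm z)\<^sup>2) * ((2 + norm z) / (1 - (norm z)\<^sup>2))"
      using weight \<alpha> by (intro mult_mono powr_le_one_le norm_deriv_cesaro_le hol bounded z) auto
    also have "\<dots> \<le> 3"
      using weight z by simp
    finally show "ereal ((1 - (norm z)\<^sup>2) powr \<alpha> * norm (deriv (cesaro f) z)) \<le> 3"
      by simp
  qed
  ultimately have "bloch_norm \<alpha> (cesaro f) \<le> ereal 1 + 3"
    unfolding bloch_norm_def by (intro add_mono) auto
  then show ?thesis
    by simp
qed

lemma cesaro_opnorm_le_4: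
  assumes "1 \<le> \<alpha>"
  shows "cesaro_opnorm \<alpha> \<le> 4"
  unfolding cesaro_opnorm_def
proof (rule SUP_least)
  fix f
  assume "f \<in> {f \<in> Hinf. hinf_norm f \<le> 1}"
  then show "bloch_norm \<alpha> (cesaro f) \<le> 4"
    using norm_le_hinf_norm
    by (intro bloch_norm_cesaro_le_4 assms) (auto simp: Hinf_def intro: order_trans)
qed

definition cesaro_one_deriv :: "real \<Rightarrow> real" where
  "cesaro_one_deriv x = (x / (1 - x) + ln (1 - x)) / x\<^sup>2"

lemma has_integral_cesaro_one_deriv:
  fixes x :: real
  assumes x: "x \<noteq> 0" "x < 1"
  shows "((\<lambda>t. t / (1 - t * x)\<^sup>2) has_integral cesaro_one_deriv x) {0..1}"
proof -
  define F where "F t = (1 / (1 - t * x) + ln (1 - t * x)) / x\<^sup>2" for t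
  have "((\<lambda>t. t / (1 - t * x)\<^sup>2) has_integral F 1 - F 0) {0..1}"
  proof (rule fundamental_theorem_of_calculus)
    fix t :: real
    assume t: "t \<in> {0..1}"
    have pos: "0 < 1 - t * x"
      by (rule one_minus_mult_pos[OF t x(2)])
    have regroup: "(x / u\<^sup>2 - x / u) / x\<^sup>2 = (1 - u) / x / u\<^sup>2" if "u \<noteq> 0" for u :: real
      using that x(1) by (simp add: field_simps power2_eq_square)
    have "((\<lambda>t. 1 / (1 - t * x)) has_real_derivative x / (1 - t * x)\<^sup>2) (at t)"
      using pos by (auto intro!: derivative_eq_intros simp: field_simps power2_eq_square)
    moreover have "((\<lambda>t. ln (1 - t * x)) has_real_derivative - x / (1 - t * x)) (at t)"
      using pos by (auto intro!: derivative_eq_intros simp: field_simps)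
    ultimately have "(F has_real_derivative (x / (1 - t * x)\<^sup>2 - x / (1 - t * x)) / x\<^sup>2) (at t)"
      unfolding F_def by (rule DERIV_cong[OF DERIV_cdivide[OF DERIV_add]]) simp
    also have "(x / (1 - t * x)\<^sup>2 - x / (1 - t * x)) / x\<^sup>2 = t / (1 - t * x)\<^sup>2"
      using regroup[of "1 - t * x"] pos x(1) by simp
    finally show "(F has_vector_derivative t / (1 - t * x)\<^sup>2) (at t within {0..1})"
      by (simp add: has_real_derivative_iff_has_vector_derivative[symmetric] has_field_derivative_at_within)
  qed simp
  also have "F 1 - F 0 = cesaro_one_deriv x"
    using x by (simp add: F_def cesaro_one_deriv_def field_simps)
  finally show ?thesis .
qed

lemma deriv_cesaro_one:
  fixes x :: real
  assumes x: "x \<noteq> 0" "\<bar>x\<bar> < 1"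
  shows "deriv (cesaro (\<lambda>_. 1)) (of_real x) = of_real (cesaro_one_deriv x)"
proof -
  have "cesaro_deriv_integrand (\<lambda>_. 1) (of_real x) = (\<lambda>t. of_real (t / (1 - t * x)\<^sup>2))"
    by (simp add: cesaro_deriv_integrand_def fun_eq_iff)
  moreover have "((\<lambda>t. of_real (t / (1 - t * x)\<^sup>2)) has_integral
      (of_real (cesaro_one_deriv x) :: complex)) {0..1}"
    using x by (intro has_integral_of_real has_integral_cesaro_one_deriv) auto
  ultimately show ?thesis
    using x has_field_derivative_cesaro[of "\<lambda>_. 1" "of_real x"]
    by (simp add: DERIV_imp_deriv integral_unique)
qed

lemma cesaro_opnorm_ge_cesaro_one:
  assumes x: "0 < x" "x < 1"
  shows "ereal (1 + (1 - x\<^sup>2) powr \<alpha> * cesaro_one_deriv x) \<le> cesaro_opnorm \<alpha>"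
proof -
  let ?S = "SUP z\<in>ball 0 1. ereal ((1 - (norm z)\<^sup>2) powr \<alpha> * norm (deriv (cesaro (\<lambda>_. 1)) z))"
  have "(1 - x\<^sup>2) powr \<alpha> * cesaro_one_deriv x \<le> (1 - x\<^sup>2) powr \<alpha> * \<bar>cesaro_one_deriv x\<bar>"
    by (simp add: mult_left_mono)
  also have "\<dots> = (1 - (norm (of_real x :: complex))\<^sup>2) powr \<alpha>
      * norm (deriv (cesaro (\<lambda>_. 1)) (of_real x))"
    using x by (simp add: deriv_cesaro_one)
  finally have "ereal ((1 - x\<^sup>2) powr \<alpha> * cesaro_one_deriv x) \<le> ?S"
    using x by (intro SUP_upper2[of "of_real x"]) auto
  then have "ereal 1 + ereal ((1 - x\<^sup>2) powr \<alpha> * cesaro_one_deriv x) \<le> ereal 1 + ?S"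
    by (rule add_left_mono)
  then have "ereal (1 + (1 - x\<^sup>2) powr \<alpha> * cesaro_one_deriv x) \<le> ereal 1 + ?S"
    by simp
  also have "\<dots> = bloch_norm \<alpha> (cesaro (\<lambda>_. 1))"
    by (simp add: bloch_norm_def cesaro_def)
  also have "\<dots> \<le> cesaro_opnorm \<alpha>"
    unfolding cesaro_opnorm_def
  proof (rule SUP_upper)
    have "(\<lambda>_::complex. 1::complex) ` ball 0 1 = {1}"
      by (rule image_constant[of 0]) simp
    then show "(\<lambda>_. 1) \<in> {f \<in> Hinf. hinf_norm f \<le> 1}"
      by (simp add: Hinf_def hinf_norm_def)
  qed
  finally show ?thesis .
qed

lemma cesaro_opnorm_ge_limit:
  assumes F: "F \<noteq> bot" "\<forall>\<^sub>F x in F. x \<in> {0<..<1}"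
    and lim: "((\<lambda>x. ereal (1 + (1 - x\<^sup>2) powr \<alpha> * cesaro_one_deriv x)) \<longlongrightarrow> L) F"
  shows "L \<le> cesaro_opnorm \<alpha>"
proof (rule tendsto_le[OF F(1) tendsto_const lim])
  show "\<forall>\<^sub>F x in F. ereal (1 + (1 - x\<^sup>2) powr \<alpha> * cesaro_one_deriv x) \<le> cesaro_opnorm \<alpha>"
    using F(2) by eventually_elim (simp add: cesaro_opnorm_ge_cesaro_one)
qed

lemma cesaro_opnorm_ge_3_halves: "ereal (3 / 2) \<le> cesaro_opnorm \<alpha>"
proof (rule cesaro_opnorm_ge_limit[OF _ eventually_at_right_real[OF zero_less_one]])
  have "((\<lambda>x. 1 + (1 - x\<^sup>2) powr \<alpha> * cesaro_one_deriv x) \<longlongrightarrow> 3 / 2) (at_right 0)"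
    unfolding cesaro_one_deriv_def by real_asymp
  then show "((\<lambda>x. ereal (1 + (1 - x\<^sup>2) powr \<alpha> * cesaro_one_deriv x)) \<longlongrightarrow> ereal (3 / 2)) (at_right 0)"
    by (rule tendsto_ereal)
qed simp

lemma cesaro_opnorm_1_ge_3: "3 \<le> cesaro_opnorm 1"
proof (rule cesaro_opnorm_ge_limit[OF _ eventually_at_left_real[OF zero_less_one]])
  have "((\<lambda>x. 1 + (1 - x\<^sup>2) powr 1 * cesaro_one_deriv x) \<longlongrightarrow> 3) (at_left 1)"
    unfolding cesaro_one_deriv_def by real_asymp
  then show "((\<lambda>x. ereal (1 + (1 - x\<^sup>2) powr 1 * cesaro_one_deriv x)) \<longlongrightarrow> 3) (at_left 1)"
    by (simp add: tendsto_ereal)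
qed simp

lemma cesaro_opnorm_infinite:
  assumes "0 < \<alpha>" "\<alpha> < 1"
  shows "cesaro_opnorm \<alpha> = \<infinity>"
proof -
  have "filterlim (\<lambda>x. 1 + (1 - x\<^sup>2) powr \<alpha> * cesaro_one_deriv x) at_top (at_left 1)"
    unfolding cesaro_one_deriv_def using assms by real_asymp
  then have "\<infinity> \<le> cesaro_opnorm \<alpha>"
    by (intro cesaro_opnorm_ge_limit[OF _ eventually_at_left_real[OF zero_less_one]])
      (simp_all add: tendsto_PInfty_eq_at_top)
  then show ?thesis
    by simp
qed

theorem theorem7p1:
  fixes \<alpha> :: real
  shows "(\<alpha> = 1 \<longrightarrow> 3 \<le> cesaro_opnorm \<alpha> \<and> cesaro_opnorm \<alpha> \<le> 4)
       \<and> (\<alpha> > 1 \<longrightarrow> ereal (3/2) \<le> cesaro_opnorm \<alpha> \<and> cesaro_opnorm \<alpha> \<le> 4)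
       \<and> (0 < \<alpha> \<and> \<alpha> < 1 \<longrightarrow> cesaro_opnorm \<alpha> = \<infinity>)"
  using cesaro_opnorm_1_ge_3 cesaro_opnorm_ge_3_halves[of \<alpha>] cesaro_opnorm_le_4[of \<alpha>]
    cesaro_opnorm_infinite[of \<alpha>]
  by auto

end
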